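(* Let $\mathcal M=(X,(U_x)_{x\in X})$ be a local Moufang set with little projective group $G$. If $x,y\in X$ satisfy $x\not\sim y$, then $\langle U_x,U_y\rangle = G$.
   Context: Group actions are right actions, written $xg$; conjugation is $g^h=h^{-1}gh$. For a set $X$ with an equivalence relation $\sim$, $\overline{x}$ denotes the class of $x$, $\overline X$ the set of classes, and $\mathrm{Sym}(X,\sim)$ the group of bijections $g$ of $X$ with $x\sim y\iff xg\sim yg$; each such $g$ induces a permutation $\overline g$ of $\overline X$, and for a subgroup $U\le \mathrm{Sym}(X,\sim)$, $\overline U$ is the induced group of permutations of $\overline X$. A local Moufang set consists of a set with equivalence relation $(X,\sim)$ with $|\overline X|>2$ and, for each $x\in X$, a subgroup (root group) $U_x\le\mathrm{Sym}(X,\sim)$ such that: (LM0) if $x\sim y$ then $\overline{U_x}=\overline{U_y}$; (LM1) $U_x$ fixes $x$ and acts sharply transitively on $X\setminus\overline x$; (LM1') $\overline{U_x}$ fixes $\overline x$ and acts sharply transitively on $\overline X\setminus\{\overline x\}$; (LM2) $U_x^g=U_{xg}$ for all $x\in X$ and all $g$ in the little projective group $G:=\langle U_x\mid x\in X\rangle$. *)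

theory Defs
  imports "HOL-Algebra.Bij" "HOL-Algebra.Generated_Groups"
begin

text \<open>Permutations of X are represented by the extensional bijections of the
HOL-Algebra group BijGroup X; the image of a point a under g is g a.\<close>

definition SymEq :: "'a set \<Rightarrow> 'a rel \<Rightarrow> ('a \<Rightarrow> 'a) set" where
  "SymEq X r = {g \<in> Bij X. \<forall>a\<in>X. \<forall>b\<in>X. (a, b) \<in> r \<longleftrightarrow> (g a, g b) \<in> r}"

definition induced :: "'a set \<Rightarrow> 'a rel \<Rightarrow> ('a \<Rightarrow> 'a) \<Rightarrow> ('a set \<Rightarrow> 'a set)" where
  "induced X r g = (\<lambda>C \<in> X // r. g ` C)"

definition little_group :: "'a set \<Rightarrow> ('a \<Rightarrow> ('a \<Rightarrow> 'a) set) \<Rightarrow> ('a \<Rightarrow> 'a) set" where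
  "little_group X U = generate (BijGroup X) (\<Union>x\<in>X. U x)"

definition local_moufang_set ::
  "'a set \<Rightarrow> 'a rel \<Rightarrow> ('a \<Rightarrow> ('a \<Rightarrow> 'a) set) \<Rightarrow> bool" where
  "local_moufang_set X r U \<longleftrightarrow>
     equiv X r \<and>
     (infinite (X // r) \<or> 2 < card (X // r)) \<and>
     (\<forall>x\<in>X. subgroup (U x) (BijGroup X) \<and> U x \<subseteq> SymEq X r) \<and>
     \<comment> \<open>LM0\<close>
     (\<forall>x\<in>X. \<forall>y\<in>X. (x, y) \<in> r \<longrightarrow> induced X r ` U x = induced X r ` U y) \<and>
     \<comment> \<open>LM1\<close>
     (\<forall>x\<in>X. (\<forall>u\<in>U x. u x = x \<and> u ` (X - r `` {x}) = X - r `` {x}) \<and>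
        (\<forall>y\<in>X - r `` {x}. \<forall>z\<in>X - r `` {x}. \<exists>!u. u \<in> U x \<and> u y = z)) \<and>
     \<comment> \<open>LM1'\<close>
     (\<forall>x\<in>X. (\<forall>u\<in>U x. induced X r u (r `` {x}) = r `` {x}) \<and>
        (\<forall>C\<in>X // r - {r `` {x}}. \<forall>D\<in>X // r - {r `` {x}}.
            \<exists>!p. p \<in> induced X r ` U x \<and> p C = D)) \<and>
     \<comment> \<open>LM2: U_x^g = g^-1 U_x g (right actions) equals U_{xg}\<close>
     (\<forall>g\<in>little_group X U. \<forall>x\<in>X.
        U (g x) = (\<lambda>u. g \<otimes>\<^bsub>BijGroup X\<^esub> u \<otimes>\<^bsub>BijGroup X\<^esub> inv\<^bsub>BijGroup X\<^esub> g) ` U x)"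

end

theory Submission
  imports Defs
begin

text \<open>Let \<open>H = \<langle>U\<^sub>x, U\<^sub>y\<rangle>\<close>. Conjugating a root group contained in \<open>H\<close> by an element of
  another root group contained in \<open>H\<close> gives again a root group in \<open>H\<close> (LM2). Since \<open>U\<^sub>x\<close> is
  transitive on the points not equivalent to \<open>x\<close>, all those root groups \<open>U\<^sub>z\<close> are conjugates
  of \<open>U\<^sub>y\<close> by elements of \<open>U\<^sub>x\<close>; symmetrically, the points equivalent to \<open>x\<close> are reached from
  \<open>x\<close> by \<open>U\<^sub>y\<close>. Hence \<open>H\<close> contains every root group, i.e. \<open>H = G\<close>.\<close>

lemma local_moufang_set_equiv:
  "local_moufang_set X r U \<Longrightarrow> equiv X r"
  by (simp add: local_moufang_set_def)

lemma local_moufang_set_root_subgroup: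
  "local_moufang_set X r U \<Longrightarrow> z \<in> X \<Longrightarrow> subgroup (U z) (BijGroup X)"
  by (simp add: local_moufang_set_def)

lemma local_moufang_set_root_transitive:
  assumes "local_moufang_set X r U" and "z \<in> X"
    and "a \<in> X - r `` {z}" and "b \<in> X - r `` {z}"
  obtains u where "u \<in> U z" and "u a = b"
proof -
  have "\<forall>x\<in>X. (\<forall>u\<in>U x. u x = x \<and> u ` (X - r `` {x}) = X - r `` {x}) \<and>
      (\<forall>y\<in>X - r `` {x}. \<forall>z\<in>X - r `` {x}. \<exists>!u. u \<in> U x \<and> u y = z)"
    using assms(1) unfolding local_moufang_set_def by (elim conjE)
  with assms(2-4) have "\<exists>!u. u \<in> U z \<and> u a = b" by blast
  then show ?thesis using that by blast
qed

lemma local_moufang_set_root_conj: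
  assumes "local_moufang_set X r U" and "g \<in> little_group X U" and "z \<in> X"
  shows "U (g z) = (\<lambda>u. g \<otimes>\<^bsub>BijGroup X\<^esub> u \<otimes>\<^bsub>BijGroup X\<^esub> inv\<^bsub>BijGroup X\<^esub> g) ` U z"
proof -
  have "\<forall>g\<in>little_group X U. \<forall>x\<in>X.
      U (g x) = (\<lambda>u. g \<otimes>\<^bsub>BijGroup X\<^esub> u \<otimes>\<^bsub>BijGroup X\<^esub> inv\<^bsub>BijGroup X\<^esub> g) ` U x"
    using assms(1) unfolding local_moufang_set_def by (elim conjE)
  with assms(2,3) show ?thesis by blast
qed

lemma root_group_subset_little_group:
  "z \<in> X \<Longrightarrow> U z \<subseteq> little_group X U"
  unfolding little_group_def by (auto intro: generate.incl)

lemma root_group_conj_subset_subgroup: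
  assumes "local_moufang_set X r U" and "subgroup H (BijGroup X)"
    and "v \<in> X" and "w \<in> X" and "g \<in> U v"
    and "U v \<subseteq> H" and "U w \<subseteq> H"
  shows "U (g w) \<subseteq> H"
proof -
  have g: "g \<in> little_group X U"
    using root_group_subset_little_group[OF assms(3)] assms(5) by (rule subsetD)
  have "g \<in> H" using assms(5,6) by (rule rev_subsetD)
  then have "g \<otimes>\<^bsub>BijGroup X\<^esub> u \<otimes>\<^bsub>BijGroup X\<^esub> inv\<^bsub>BijGroup X\<^esub> g \<in> H" if "u \<in> U w" for u
    using assms(7) that
    by (intro subgroup.m_closed[OF assms(2)] subgroup.m_inv_closed[OF assms(2)]) auto
  then show ?thesis
    unfolding local_moufang_set_root_conj[OF assms(1) g assms(4)] by (rule image_subsetI)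
qed

lemma subgroup_generate_root_groups:
  assumes "local_moufang_set X r U" and "x \<in> X" and "y \<in> X"
  shows "subgroup (generate (BijGroup X) (U x \<union> U y)) (BijGroup X)"
proof -
  have "U x \<subseteq> carrier (BijGroup X)" and "U y \<subseteq> carrier (BijGroup X)"
    using subgroup.subset[OF local_moufang_set_root_subgroup[OF assms(1,2)]]
      subgroup.subset[OF local_moufang_set_root_subgroup[OF assms(1,3)]] .
  then show ?thesis
    by (simp add: group.generate_is_subgroup[OF group_BijGroup])
qed

lemma root_group_subset_generate_pair:
  assumes M: "local_moufang_set X r U"
    and "x \<in> X" and "y \<in> X" and "(x, y) \<notin> r" and "z \<in> X"
  shows "U z \<subseteq> generate (BijGroup X) (U x \<union> U y)"
proof -
  let ?H = "generate (BijGroup X) (U x \<union> U y)"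
  have conj: "U (u w) \<subseteq> ?H" if "v \<in> {x, y}" "w \<in> {x, y}" "u \<in> U v" for u v w
  proof (rule root_group_conj_subset_subgroup[OF M subgroup_generate_root_groups[OF M assms(2,3)],
        where v = v and w = w and g = u])
    show "v \<in> X" "w \<in> X" "u \<in> U v"
      using that assms(2,3) by auto
    show "U v \<subseteq> ?H" "U w \<subseteq> ?H"
      using that by (auto intro: generate.incl)
  qed
  have "equiv X r" using M by (rule local_moufang_set_equiv)
  then have "sym r" and "trans r" by (simp_all add: equiv_def)
  show ?thesis
  proof (cases "(x, z) \<in> r")
    case False
    with assms(3,4,5) have "y \<in> X - r `` {x}" and "z \<in> X - r `` {x}" by auto
    then obtain u where "u \<in> U x" and "u y = z"
      by (rule local_moufang_set_root_transitive[OF M assms(2)])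
    with conj[of x y u] show ?thesis by simp
  next
    case True
    have "(y, x) \<notin> r" using assms(4) \<open>sym r\<close> by (blast dest: symD)
    moreover have "(y, z) \<notin> r"
      using True assms(4) \<open>sym r\<close> \<open>trans r\<close> by (blast dest: symD transD)
    ultimately have "x \<in> X - r `` {y}" and "z \<in> X - r `` {y}" using assms(2,5) by auto
    then obtain u where "u \<in> U y" and "u x = z"
      by (rule local_moufang_set_root_transitive[OF M assms(3)])
    with conj[of y x u] show ?thesis by simp
  qed
qed

theorem mainTheorem1:
  assumes "local_moufang_set X r U"
    and "x \<in> X" and "y \<in> X" and "(x, y) \<notin> r"
  shows "generate (BijGroup X) (U x \<union> U y) = little_group X U"
proof
  show "generate (BijGroup X) (U x \<union> U y) \<subseteq> little_group X U"
    unfolding little_group_def using assms(2,3)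
    by (intro group.mono_generate[OF group_BijGroup]) auto
  have "\<Union> (U ` X) \<subseteq> generate (BijGroup X) (U x \<union> U y)"
    using root_group_subset_generate_pair[OF assms] by (rule UN_least)
  then show "little_group X U \<subseteq> generate (BijGroup X) (U x \<union> U y)"
    unfolding little_group_def
    by (rule group.generate_subgroup_incl[OF group_BijGroup _ subgroup_generate_root_groups[OF assms(1-3)]])
qed

end
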